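(* Let $n\geq 5$ and $1\leq i\leq\lfloor n/2\rfloor$. Let $G_i$ be the graph obtained from the complete graph $K_n$ by deleting $i$ edges, each of which joins two saturated vertices (equivalently, deleting the edges of a matching of size $i$). If $g:V((G_i)_1)\to V((G_i)_2)$ is a constant function, then $$Dist(F_{G_i})=\max\{n-2i,\ \phi(i)\}.$$
   Context: A vertex of a graph is saturated if it is adjacent to all other vertices. $Dist(H)$ is the least $t$ such that $H$ has a labeling $V(H)\to\{1,\dots,t\}$ preserved by no non-identity automorphism of $H$. Functigraph: for disjoint copies $H_1,H_2$ of a graph $H$ and a function $g:V(H_1)\to V(H_2)$, $F_H$ has vertex set $V(H_1)\cup V(H_2)$ and edge set $E(H_1)\cup E(H_2)\cup\{uv: u\in V(H_1),\ g(u)=v\}$. The function $\phi:\mathbb{N}\to\mathbb{N}\setminus\{1\}$ is defined by $\phi(i)=k$, where $k$ is the least number (with $k\ge 2$) such that $i\leq\binom{k}{2}$; e.g. $\phi(32)=9$. *)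

theory Defs
  imports Main
begin

definition complete_edges :: "'a set \<Rightarrow> 'a set set" where
  "complete_edges V = {{u, v} | u v. u \<in> V \<and> v \<in> V \<and> u \<noteq> v}"

definition saturated :: "'a set \<Rightarrow> 'a set set \<Rightarrow> 'a \<Rightarrow> bool" where
  "saturated V E v \<longleftrightarrow> v \<in> V \<and> (\<forall>u\<in>V. u \<noteq> v \<longrightarrow> {u, v} \<in> E)"

definition is_matching :: "'a set set \<Rightarrow> bool" where
  "is_matching M \<longleftrightarrow> (\<forall>e\<in>M. \<forall>f\<in>M. e \<noteq> f \<longrightarrow> e \<inter> f = {})"

definition graph_aut :: "'a set \<Rightarrow> 'a set set \<Rightarrow> ('a \<Rightarrow> 'a) \<Rightarrow> bool" where
  "graph_aut V E \<sigma> \<longleftrightarrow> bij_betw \<sigma> V V \<and>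
     (\<forall>u\<in>V. \<forall>v\<in>V. {u, v} \<in> E \<longleftrightarrow> {\<sigma> u, \<sigma> v} \<in> E)"

definition distinguishing_labeling :: "'a set \<Rightarrow> 'a set set \<Rightarrow> nat \<Rightarrow> ('a \<Rightarrow> nat) \<Rightarrow> bool" where
  "distinguishing_labeling V E t l \<longleftrightarrow> l ` V \<subseteq> {1..t} \<and>
     (\<forall>\<sigma>. graph_aut V E \<sigma> \<and> (\<forall>v\<in>V. l (\<sigma> v) = l v) \<longrightarrow> (\<forall>v\<in>V. \<sigma> v = v))"

definition Dist :: "'a set \<Rightarrow> 'a set set \<Rightarrow> nat" where
  "Dist V E = (LEAST t. \<exists>l. distinguishing_labeling V E t l)"

text \<open>Functigraph: two disjoint copies (Inl / Inr) of H with edges u -- g(u).\<close>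

definition functigraph_V :: "'a set \<Rightarrow> ('a + 'a) set" where
  "functigraph_V V = Inl ` V \<union> Inr ` V"

definition functigraph_E :: "'a set \<Rightarrow> 'a set set \<Rightarrow> ('a \<Rightarrow> 'a) \<Rightarrow> ('a + 'a) set set" where
  "functigraph_E V E g = (image Inl) ` E \<union> (image Inr) ` E \<union> {{Inl u, Inr (g u)} | u. u \<in> V}"

definition phi :: "nat \<Rightarrow> nat" where
  "phi i = (LEAST k. 2 \<le> k \<and> i \<le> k choose 2)"

end

theory Submission
  imports Defs "HOL-Combinatorics.Transposition"
begin

text \<open>Write G for K_n minus the matching M and F for its functigraph with the constant
function c. A labeling of one copy of G is called matching-separating if it is injective on the
n - 2i unmatched vertices and on each matching edge, and gives distinct matching edges distinct
label pairs; with t labels such a labeling exists iff n - 2i \<le> t and i \<le> t choose 2, i.e.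
iff max (n - 2i) (phi i) \<le> t.

Every distinguishing labeling is matching-separating on the first copy: otherwise a
transposition of two vertices, or a double transposition exchanging two matching edges, of the
first copy alone is a label-preserving automorphism of F.

Conversely, label both copies by the same matching-separating labeling. The vertex c of the
second copy is the only vertex of degree > n, so every automorphism fixes it; as the first copy
is connected and avoids it, the automorphism maps each copy onto itself, and there it is an
automorphism of G preserving a matching-separating labeling, hence the identity.\<close>

lemma functigraph_E_cong:
  assumes "\<And>u. u \<in> V \<Longrightarrow> g u = g' u"
  shows "functigraph_E V E g = functigraph_E V E g'"
  unfolding functigraph_E_def using assms by (auto intro!: arg_cong[where f="\<lambda>X. _ \<union> X"])

lemma Inl_in_functigraph_V [simp]: "Inl a \<in> functigraph_V V \<longleftrightarrow> a \<in> V"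
  and Inr_in_functigraph_V [simp]: "Inr a \<in> functigraph_V V \<longleftrightarrow> a \<in> V"
  by (auto simp: functigraph_V_def)

lemma functigraph_V_cases [consumes 1, case_names Inl Inr]:
  assumes "x \<in> functigraph_V V"
  obtains a where "a \<in> V" "x = Inl a" | a where "a \<in> V" "x = Inr a"
  using assms by (auto simp: functigraph_V_def)

lemma inj_doubleton_in_image_image_iff:
  assumes "inj f" shows "{f a, f b} \<in> image f ` E \<longleftrightarrow> {a, b} \<in> E"
proof -
  have eq: "{f a, f b} = f ` S \<longleftrightarrow> S = {a, b}" for S
    using inj_image_eq_iff[OF assms, of "{a, b}" S] by auto
  have "{f a, f b} \<in> image f ` E \<longleftrightarrow> (\<exists>S\<in>E. {f a, f b} = f ` S)" by (rule image_iff)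
  also have "\<dots> \<longleftrightarrow> {a, b} \<in> E" by (simp add: eq)
  finally show ?thesis .
qed

lemma in_image_image_imp_subset_range: "X \<in> image f ` E \<Longrightarrow> X \<subseteq> range f"
  by blast

lemma Inl_Inl_in_functigraph_E [simp]:
  "{Inl a, Inl b} \<in> functigraph_E V E g \<longleftrightarrow> {a, b} \<in> E"
proof -
  have "{Inl a, Inl b} \<notin> image Inr ` E" by (auto dest!: in_image_image_imp_subset_range)
  moreover have "{Inl a, Inl b} \<noteq> {Inl u, Inr (g u)}" for u by (auto simp: doubleton_eq_iff)
  ultimately show ?thesis
    by (auto simp: functigraph_E_def inj_doubleton_in_image_image_iff)
qed

lemma Inr_Inr_in_functigraph_E [simp]:
  "{Inr a, Inr b} \<in> functigraph_E V E g \<longleftrightarrow> {a, b} \<in> E"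
proof -
  have "{Inr a, Inr b} \<notin> image Inl ` E" by (auto dest!: in_image_image_imp_subset_range)
  moreover have "{Inr a, Inr b} \<noteq> {Inl u, Inr (g u)}" for u by (auto simp: doubleton_eq_iff)
  ultimately show ?thesis
    by (auto simp: functigraph_E_def inj_doubleton_in_image_image_iff)
qed

lemma Inl_Inr_in_functigraph_E [simp]:
  "{Inl a, Inr b} \<in> functigraph_E V E g \<longleftrightarrow> a \<in> V \<and> b = g a"
  and Inr_Inl_in_functigraph_E [simp]:
  "{Inr b, Inl a} \<in> functigraph_E V E g \<longleftrightarrow> a \<in> V \<and> b = g a"
proof -
  have "{Inl a, Inr b} = {Inl u, Inr (g u)} \<longleftrightarrow> a = u \<and> b = g u" for u
    by (auto simp: doubleton_eq_iff)
  then show "{Inl a, Inr b} \<in> functigraph_E V E g \<longleftrightarrow> a \<in> V \<and> b = g a"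
    by (auto simp: functigraph_E_def dest!: in_image_image_imp_subset_range)
  then show "{Inr b, Inl a} \<in> functigraph_E V E g \<longleftrightarrow> a \<in> V \<and> b = g a"
    by (simp add: insert_commute)
qed

definition neighbors :: "'a set \<Rightarrow> 'a set set \<Rightarrow> 'a \<Rightarrow> 'a set" where
  "neighbors V E x = {y \<in> V. {x, y} \<in> E}"

lemma card_neighbors_graph_aut:
  assumes "graph_aut V E \<sigma>" and "x \<in> V"
  shows "card (neighbors V E (\<sigma> x)) = card (neighbors V E x)"
proof -
  have bij: "bij_betw \<sigma> V V" and adj: "\<And>u v. u \<in> V \<Longrightarrow> v \<in> V \<Longrightarrow> {\<sigma> u, \<sigma> v} \<in> E \<longleftrightarrow> {u, v} \<in> E"
    using assms(1) unfolding graph_aut_def by blast+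
  have "\<sigma> ` neighbors V E x = neighbors V E (\<sigma> x)"
  proof
    show "\<sigma> ` neighbors V E x \<subseteq> neighbors V E (\<sigma> x)"
      using bij_betw_apply[OF bij] adj assms(2) by (auto simp: neighbors_def)
    show "neighbors V E (\<sigma> x) \<subseteq> \<sigma> ` neighbors V E x"
    proof
      fix z assume "z \<in> neighbors V E (\<sigma> x)"
      moreover then obtain y where "y \<in> V" "z = \<sigma> y"
        using bij_betw_imp_surj_on[OF bij] by (auto simp: neighbors_def)
      ultimately show "z \<in> \<sigma> ` neighbors V E x"
        using adj assms(2) by (auto simp: neighbors_def)
    qed
  qed
  moreover have "inj_on \<sigma> (neighbors V E x)"
    using bij_betw_imp_inj_on[OF bij] by (rule inj_on_subset) (auto simp: neighbors_def)
  ultimately show ?thesis by (metis card_image)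
qed

lemma graph_aut_functigraph_map_sum:
  assumes "graph_aut V E \<pi>" and "\<And>u. u \<in> V \<Longrightarrow> g (\<pi> u) = g u"
  shows "graph_aut (functigraph_V V) (functigraph_E V E g) (map_sum \<pi> id)"
proof -
  have bij: "bij_betw \<pi> V V" and adj: "\<And>u v. u \<in> V \<Longrightarrow> v \<in> V \<Longrightarrow> {u, v} \<in> E \<longleftrightarrow> {\<pi> u, \<pi> v} \<in> E"
    using assms(1) unfolding graph_aut_def by blast+
  have "inj_on (map_sum \<pi> id) (functigraph_V V)"
  proof (rule inj_onI)
    fix x y assume "x \<in> functigraph_V V" "y \<in> functigraph_V V" "map_sum \<pi> id x = map_sum \<pi> id y"
    then show "x = y"
      using inj_onD[OF bij_betw_imp_inj_on[OF bij]]
      by (elim functigraph_V_cases) auto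
  qed
  moreover have "map_sum \<pi> id ` functigraph_V V = functigraph_V V"
  proof -
    have "map_sum \<pi> id ` functigraph_V V = Inl ` \<pi> ` V \<union> Inr ` V"
      unfolding functigraph_V_def image_Un by (simp add: image_comp comp_def)
    then show ?thesis using bij_betw_imp_surj_on[OF bij] by (simp add: functigraph_V_def)
  qed
  moreover have "{x, y} \<in> functigraph_E V E g \<longleftrightarrow> {map_sum \<pi> id x, map_sum \<pi> id y} \<in> functigraph_E V E g"
    if "x \<in> functigraph_V V" and "y \<in> functigraph_V V" for x y
    using that bij_betw_apply[OF bij] by (elim functigraph_V_cases) (simp_all add: adj assms(2))
  ultimately show ?thesis unfolding graph_aut_def bij_betw_def by blast
qed

lemma graph_aut_functigraph_restrict:
  assumes aut: "graph_aut (functigraph_V V) (functigraph_E V E g) \<sigma>"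
    and "\<sigma> ` Inl ` V = Inl ` V" and "\<sigma> ` Inr ` V = Inr ` V"
  shows "graph_aut V E (projl \<circ> \<sigma> \<circ> Inl)" and "graph_aut V E (projr \<circ> \<sigma> \<circ> Inr)"
proof -
  have bij: "bij_betw \<sigma> (functigraph_V V) (functigraph_V V)"
    and adj: "\<And>x y. x \<in> functigraph_V V \<Longrightarrow> y \<in> functigraph_V V \<Longrightarrow>
      {x, y} \<in> functigraph_E V E g \<longleftrightarrow> {\<sigma> x, \<sigma> y} \<in> functigraph_E V E g"
    using aut unfolding graph_aut_def by blast+
  have restrict: "graph_aut V E (p \<circ> \<sigma> \<circ> f)"
    if p_f: "\<And>x. p (f x) = x" and "f ` V \<subseteq> functigraph_V V" and image: "\<sigma> ` f ` V = f ` V"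
      and f_adj: "\<And>a b. {f a, f b} \<in> functigraph_E V E g \<longleftrightarrow> {a, b} \<in> E"
    for f :: "'a \<Rightarrow> 'a + 'a" and p
  proof -
    define \<pi> where "\<pi> = p \<circ> \<sigma> \<circ> f"
    have \<sigma>_f: "\<sigma> (f u) = f (\<pi> u) \<and> \<pi> u \<in> V" if "u \<in> V" for u
    proof -
      have "\<sigma> (f u) \<in> \<sigma> ` f ` V" using that by (intro imageI)
      then have "\<sigma> (f u) \<in> f ` V" unfolding image .
      then obtain w where "w \<in> V" "\<sigma> (f u) = f w" by (rule imageE)
      then show ?thesis using p_f by (simp add: \<pi>_def)
    qed
    have "inj_on \<pi> V"
    proof (rule inj_onI)
      fix x y assume "x \<in> V" "y \<in> V" "\<pi> x = \<pi> y"
      then have "\<sigma> (f x) = \<sigma> (f y)" using \<sigma>_f by simp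
      moreover have "f x \<in> functigraph_V V" "f y \<in> functigraph_V V"
        using \<open>x \<in> V\<close> \<open>y \<in> V\<close> \<open>f ` V \<subseteq> functigraph_V V\<close> by auto
      ultimately have "f x = f y" by (rule inj_onD[OF bij_betw_imp_inj_on[OF bij]])
      then have "p (f x) = p (f y)" by simp
      then show "x = y" by (simp add: p_f)
    qed
    moreover have "\<pi> ` V = V"
    proof (intro equalityI subsetI)
      fix v assume "v \<in> V"
      have "f v \<in> \<sigma> ` f ` V" unfolding image using \<open>v \<in> V\<close> by (rule imageI)
      then obtain u where "u \<in> V" "f v = \<sigma> (f u)" by auto
      then have "p (f v) = p (f (\<pi> u))" using \<sigma>_f by simp
      then show "v \<in> \<pi> ` V" using \<open>u \<in> V\<close> by (simp add: p_f)
    qed (use \<sigma>_f in auto)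
    moreover have "{a, b} \<in> E \<longleftrightarrow> {\<pi> a, \<pi> b} \<in> E" if "a \<in> V" "b \<in> V" for a b
      using adj[of "f a" "f b"] \<sigma>_f[OF that(1)] \<sigma>_f[OF that(2)] that \<open>f ` V \<subseteq> functigraph_V V\<close> f_adj
      by auto
    ultimately have "graph_aut V E \<pi>" unfolding graph_aut_def bij_betw_def by blast
    then show ?thesis by (simp only: \<pi>_def)
  qed
  show "graph_aut V E (projl \<circ> \<sigma> \<circ> Inl)"
    using assms(2) by (intro restrict) (auto simp: functigraph_V_def)
  show "graph_aut V E (projr \<circ> \<sigma> \<circ> Inr)"
    using assms(3) by (intro restrict) (auto simp: functigraph_V_def)
qed

lemma phi_le_iff:
  assumes "1 \<le> i" shows "phi i \<le> k \<longleftrightarrow> i \<le> k choose 2"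
proof
  have "2 \<le> phi i \<and> i \<le> phi i choose 2"
    unfolding phi_def
  proof (rule LeastI)
    show "2 \<le> Suc i \<and> i \<le> Suc i choose 2" using assms by (simp add: numeral_2_eq_2)
  qed
  moreover assume "phi i \<le> k"
  ultimately show "i \<le> k choose 2"
    using binomial_right_mono[of "phi i" k 2] by linarith
next
  assume "i \<le> k choose 2"
  moreover have "2 \<le> k"
  proof (rule ccontr)
    assume "\<not> 2 \<le> k"
    then have "k choose 2 = 0" by (simp add: binomial_eq_0)
    then show False using assms \<open>i \<le> k choose 2\<close> by linarith
  qed
  ultimately show "phi i \<le> k" unfolding phi_def by (intro Least_le) simp
qed

lemma image_doubleton_eqE:
  assumes "f ` {a, b} = f ` {x, y}"
  obtains x' y' where "{x, y} = {x', y'}" "f a = f x'" "f b = f y'"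
proof -
  have "{f a, f b} = {f x, f y}" using assms by simp
  then consider "f a = f x" "f b = f y" | "f a = f y" "f b = f x"
    by (auto simp: doubleton_eq_iff)
  then show thesis
  proof cases
    case 1
    then show thesis using that[of x y] by blast
  next
    case 2
    then show thesis using that[of y x] by (simp add: insert_commute)
  qed
qed

lemma doubleton_in_complete_edges [simp]:
  "{a, b} \<in> complete_edges V \<longleftrightarrow> a \<in> V \<and> b \<in> V \<and> a \<noteq> b"
  by (auto simp: complete_edges_def doubleton_eq_iff)

lemma graph_aut_complete_edges_Diff:
  assumes "\<And>x. x \<in> V \<Longrightarrow> \<pi> x \<in> V" and "\<And>x. x \<in> V \<Longrightarrow> \<pi> (\<pi> x) = x"
    and "\<And>e. e \<in> M \<Longrightarrow> \<pi> ` e \<in> M" and "M \<subseteq> complete_edges V"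
  shows "graph_aut V (complete_edges V - M) \<pi>"
proof -
  have "bij_betw \<pi> V V"
    by (rule bij_betw_byWitness[where f' = \<pi>]) (use assms(1,2) in auto)
  moreover have "{x, y} \<in> M \<longleftrightarrow> {\<pi> x, \<pi> y} \<in> M" if "x \<in> V" "y \<in> V" for x y
    using assms(3)[of "{x, y}"] assms(3)[of "{\<pi> x, \<pi> y}"] assms(2) that by auto
  moreover have "\<pi> x = \<pi> y \<longleftrightarrow> x = y" if "x \<in> V" "y \<in> V" for x y
    using assms(2) that by metis
  ultimately show ?thesis
    unfolding graph_aut_def using assms(1) by auto
qed

definition matching_separating :: "'a set \<Rightarrow> 'a set set \<Rightarrow> ('a \<Rightarrow> 'b) \<Rightarrow> bool" where
  "matching_separating V M l \<longleftrightarrow>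
     inj_on l (V - \<Union>M) \<and> (\<forall>e\<in>M. inj_on l e) \<and> inj_on (image l) M"

locale complete_minus_matching =
  fixes V :: "'a set" and M :: "'a set set"
  assumes finite_V: "finite V"
    and M_subset: "M \<subseteq> complete_edges V"
    and matching: "is_matching M"
begin

lemma matching_edgeE:
  assumes "e \<in> M"
  obtains a b where "a \<in> V" "b \<in> V" "a \<noteq> b" "e = {a, b}"
  using assms M_subset unfolding complete_edges_def by blast

lemma matching_edge_eq: "e \<in> M \<Longrightarrow> f \<in> M \<Longrightarrow> x \<in> e \<Longrightarrow> x \<in> f \<Longrightarrow> e = f"
  using matching unfolding is_matching_def by blast

lemma matching_partner_unique: "{x, p} \<in> M \<Longrightarrow> {x, q} \<in> M \<Longrightarrow> p = q"
  using matching_edge_eq[of "{x, p}" "{x, q}" x] by (auto simp: doubleton_eq_iff dest: matching_edge_eq)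

lemma matched_vertexE:
  assumes "x \<in> \<Union>M"
  obtains p where "{x, p} \<in> M" "p \<in> V" "p \<noteq> x"
proof -
  obtain e where "e \<in> M" "x \<in> e" using assms by blast
  moreover obtain a b where "a \<in> V" "b \<in> V" "a \<noteq> b" "e = {a, b}"
    using \<open>e \<in> M\<close> by (rule matching_edgeE)
  ultimately show thesis using that by (auto simp: insert_commute)
qed

lemma singleton_notin_matching: "{v} \<notin> M"
proof
  assume "{v} \<in> M"
  then obtain a b where "a \<noteq> b" "{v} = {a, b}" by (rule matching_edgeE)
  then show False by (metis insertI1 insert_commute singletonD)
qed

lemma finite_M: "finite M"
proof (rule finite_subset)
  show "M \<subseteq> Pow V" using M_subset by (auto simp: complete_edges_def)
qed (simp add: finite_V)

lemma card_Union_matching: "card (\<Union>M) = 2 * card M"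
proof -
  have "card (\<Union>M) = (\<Sum>e\<in>M. card e)"
    using finite_M matching
    by (intro card_Union_disjoint) (auto simp: pairwise_def disjnt_def is_matching_def elim!: matching_edgeE)
  also have "\<dots> = (\<Sum>e\<in>M. 2)"
    by (rule sum.cong) (auto elim!: matching_edgeE)
  finally show ?thesis by simp
qed

lemma matching_separating_card_le:
  assumes "matching_separating V M l" and "l ` V \<subseteq> T" and "finite T"
  shows "card (V - \<Union>M) \<le> card T" and "card M \<le> card T choose 2"
proof -
  have inj_U: "inj_on l (V - \<Union>M)" and inj_e: "\<And>e. e \<in> M \<Longrightarrow> inj_on l e"
    and inj_M: "inj_on (image l) M"
    using assms(1) unfolding matching_separating_def by blast+
  show "card (V - \<Union>M) \<le> card T"
    using card_inj_on_le[OF inj_U _ assms(3)] assms(2) by blast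
  have "l ` e \<subseteq> T \<and> card (l ` e) = 2" if e: "e \<in> M" for e
  proof -
    obtain a b where "a \<in> V" "b \<in> V" "a \<noteq> b" "e = {a, b}" using e by (rule matching_edgeE)
    then show ?thesis using assms(2) card_image[OF inj_e[OF e]] by auto
  qed
  then have "image l ` M \<subseteq> {S. S \<subseteq> T \<and> card S = 2}" by auto
  from card_inj_on_le[OF inj_M this] show "card M \<le> card T choose 2"
    using n_subsets[OF assms(3), of 2] assms(3) by simp
qed

lemma ex_matching_separating:
  assumes "finite T" and "card (V - \<Union>M) \<le> card T" and "card M \<le> card T choose 2"
  shows "\<exists>l. l ` V \<subseteq> T \<and> matching_separating V M l"
proof -
  have "finite (V - \<Union>M)" using finite_V by simp
  then obtain f where f: "f ` (V - \<Union>M) \<subseteq> T" "inj_on f (V - \<Union>M)"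
    using card_le_inj[OF _ assms(1,2)] by blast
  have "finite {S. S \<subseteq> T \<and> card S = 2}"
    by (rule rev_finite_subset[of "Pow T"]) (use assms(1) in auto)
  moreover have "card M \<le> card {S. S \<subseteq> T \<and> card S = 2}"
    using n_subsets[OF assms(1), of 2] assms(3) by simp
  ultimately obtain h where h: "h ` M \<subseteq> {S. S \<subseteq> T \<and> card S = 2}" "inj_on h M"
    using card_le_inj[OF finite_M] by blast
  have "\<forall>e\<in>M. \<exists>\<beta>. bij_betw \<beta> e (h e)"
  proof
    fix e assume e: "e \<in> M"
    then have "h e \<subseteq> T" "card (h e) = 2" using h(1) by auto
    moreover have "finite e" "card e = 2" using e by (auto elim!: matching_edgeE)
    ultimately show "\<exists>\<beta>. bij_betw \<beta> e (h e)"
      using finite_same_card_bij[of e "h e"] finite_subset[OF _ assms(1)] by simp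
  qed
  then obtain \<beta> where \<beta>: "\<forall>e\<in>M. bij_betw (\<beta> e) e (h e)" by (rule bchoice[elim_format]) blast
  define l where "l u = (if u \<in> \<Union>M then \<beta> (THE e. e \<in> M \<and> u \<in> e) u else f u)" for u
  have l_edge: "l u = \<beta> e u" if "e \<in> M" "u \<in> e" for e u
  proof -
    have "(THE e. e \<in> M \<and> u \<in> e) = e"
      by (rule the_equality) (use that matching_edge_eq in auto)
    then show ?thesis using that unfolding l_def by auto
  qed
  have image_edge: "l ` e = h e" if e: "e \<in> M" for e
  proof -
    have "l ` e = \<beta> e ` e" by (rule image_cong) (simp_all add: l_edge[OF e])
    then show ?thesis using bij_betw_imp_surj_on \<beta> e by metis
  qed
  have "l ` V \<subseteq> T"
  proof
    fix x assume "x \<in> l ` V"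
    then obtain u where "u \<in> V" "x = l u" by blast
    show "x \<in> T"
    proof (cases "u \<in> \<Union>M")
      case True
      then obtain e where "e \<in> M" "u \<in> e" by blast
      then have "x \<in> h e" using image_edge \<open>x = l u\<close> by blast
      then show ?thesis using h(1) \<open>e \<in> M\<close> by auto
    next
      case False
      then show ?thesis using f(1) \<open>u \<in> V\<close> \<open>x = l u\<close> unfolding l_def by auto
    qed
  qed
  moreover have "inj_on l (V - \<Union>M)"
    using f(2) unfolding l_def inj_on_def by simp
  moreover have "inj_on l e" if e: "e \<in> M" for e
  proof -
    have "inj_on l e \<longleftrightarrow> inj_on (\<beta> e) e" by (rule inj_on_cong) (rule l_edge[OF e])
    then show ?thesis using bij_betw_imp_inj_on \<beta> e by blast
  qed
  moreover have "inj_on (image l) M \<longleftrightarrow> inj_on h M" by (rule inj_on_cong) (rule image_edge)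
  ultimately show ?thesis using h(2) unfolding matching_separating_def by blast
qed

lemma graph_aut_fixes_if_matching_separating:
  assumes aut: "graph_aut V (complete_edges V - M) \<pi>"
    and labels: "\<And>x. x \<in> V \<Longrightarrow> l (\<pi> x) = l x"
    and sep: "matching_separating V M l" and "x \<in> V"
  shows "\<pi> x = x"
proof -
  have bij: "bij_betw \<pi> V V" using aut unfolding graph_aut_def by blast
  have M_iff: "{\<pi> u, \<pi> v} \<in> M \<longleftrightarrow> {u, v} \<in> M" if "u \<in> V" "v \<in> V" for u v
  proof (cases "u = v")
    case True
    then show ?thesis by (simp add: singleton_notin_matching)
  next
    case False
    then have "\<pi> u \<noteq> \<pi> v" using inj_onD[OF bij_betw_imp_inj_on[OF bij]] that by blast
    then show ?thesis
      using aut False that bij_betw_apply[OF bij] unfolding graph_aut_def by auto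
  qed
  show ?thesis
  proof (cases "x \<in> \<Union>M")
    case True
    then obtain p where "{x, p} \<in> M" "p \<in> V" "p \<noteq> x" by (rule matched_vertexE)
    then have "{\<pi> x, \<pi> p} \<in> M" and "l ` {\<pi> x, \<pi> p} = l ` {x, p}"
      using M_iff labels \<open>x \<in> V\<close> by auto
    with \<open>{x, p} \<in> M\<close> have "{\<pi> x, \<pi> p} = {x, p}"
      using sep unfolding matching_separating_def by (metis inj_onD)
    moreover have "\<pi> x \<noteq> p"
    proof
      assume "\<pi> x = p"
      then have "l p = l x" using labels \<open>x \<in> V\<close> by auto
      then show False
        using sep \<open>{x, p} \<in> M\<close> \<open>p \<noteq> x\<close> unfolding matching_separating_def by (meson inj_onD insertCI)
    qed
    ultimately show ?thesis by (auto simp: doubleton_eq_iff)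
  next
    case False
    have "\<pi> x \<notin> \<Union>M"
    proof
      assume "\<pi> x \<in> \<Union>M"
      then obtain w where "{\<pi> x, w} \<in> M" "w \<in> V" by (rule matched_vertexE)
      moreover from \<open>w \<in> V\<close> obtain y where "y \<in> V" "w = \<pi> y"
        using bij_betw_imp_surj_on[OF bij] by blast
      ultimately have "{x, y} \<in> M" using M_iff \<open>x \<in> V\<close> by auto
      then show False using False by blast
    qed
    then show ?thesis
      using sep False labels \<open>x \<in> V\<close> bij_betw_apply[OF bij]
      unfolding matching_separating_def by (meson DiffI inj_onD)
  qed
qed

context
  fixes c :: 'a and t :: nat and l :: "'a + 'a \<Rightarrow> nat"
  assumes dl: "distinguishing_labeling (functigraph_V V)
                 (functigraph_E V (complete_edges V - M) (\<lambda>_. c)) t l"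
begin

lemma distinguishing_labeling_involution_fixes:
  assumes "\<And>x. x \<in> V \<Longrightarrow> \<pi> x \<in> V" and "\<And>x. x \<in> V \<Longrightarrow> \<pi> (\<pi> x) = x"
    and "\<And>e. e \<in> M \<Longrightarrow> \<pi> ` e \<in> M" and "\<And>x. x \<in> V \<Longrightarrow> l (Inl (\<pi> x)) = l (Inl x)"
    and "x \<in> V"
  shows "\<pi> x = x"
proof -
  have "graph_aut V (complete_edges V - M) \<pi>"
    using assms(1-3) M_subset by (rule graph_aut_complete_edges_Diff)
  then have "graph_aut (functigraph_V V) (functigraph_E V (complete_edges V - M) (\<lambda>_. c)) (map_sum \<pi> id)"
    by (rule graph_aut_functigraph_map_sum) simp
  moreover have "\<forall>v\<in>functigraph_V V. l (map_sum \<pi> id v) = l v"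
  proof
    fix v assume "v \<in> functigraph_V V"
    then show "l (map_sum \<pi> id v) = l v"
      by (cases rule: functigraph_V_cases) (simp_all add: assms(4))
  qed
  ultimately have "\<forall>v\<in>functigraph_V V. map_sum \<pi> id v = v"
    using dl unfolding distinguishing_labeling_def by blast
  from this[rule_format, of "Inl x"] show ?thesis using \<open>x \<in> V\<close> by simp
qed

lemma distinguishing_labeling_transpose_eq:
  assumes "a \<in> V" "b \<in> V" and same_edges: "\<And>e. e \<in> M \<Longrightarrow> a \<in> e \<longleftrightarrow> b \<in> e"
    and "l (Inl a) = l (Inl b)"
  shows "a = b"
proof -
  have "transpose a b a = a"
  proof (rule distinguishing_labeling_involution_fixes[where \<pi> = "transpose a b"])
    show "transpose a b ` e \<in> M" if "e \<in> M" for e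
      using that same_edges[OF that] by simp
    show "l (Inl (transpose a b x)) = l (Inl x)" if "x \<in> V" for x
      using \<open>l (Inl a) = l (Inl b)\<close> by (simp add: transpose_def)
  qed (use assms in \<open>simp_all add: transpose_def\<close>)
  then show ?thesis by simp
qed

lemma distinguishing_labeling_inj_on_edge_labels: "inj_on (image (l \<circ> Inl)) M"
proof (rule inj_onI, rule ccontr)
  fix e e' assume "e \<in> M" "e' \<in> M" and same_labels: "(l \<circ> Inl) ` e = (l \<circ> Inl) ` e'" and "e \<noteq> e'"
  obtain a b where ab: "a \<in> V" "b \<in> V" "a \<noteq> b" "e = {a, b}" using \<open>e \<in> M\<close> by (rule matching_edgeE)
  obtain a0 b0 where "e' = {a0, b0}" using \<open>e' \<in> M\<close> by (rule matching_edgeE)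
  then have "(l \<circ> Inl) ` {a, b} = (l \<circ> Inl) ` {a0, b0}" using same_labels ab(4) by simp
  then obtain a' b' where "{a0, b0} = {a', b'}"
    and "(l \<circ> Inl) a = (l \<circ> Inl) a'" "(l \<circ> Inl) b = (l \<circ> Inl) b'"
    by (rule image_doubleton_eqE)
  then have ab': "e' = {a', b'}" and labels: "l (Inl a) = l (Inl a')" "l (Inl b) = l (Inl b')"
    using \<open>e' = {a0, b0}\<close> by simp_all
  have "a' \<in> V" "b' \<in> V" "a' \<noteq> b'"
    using \<open>e' \<in> M\<close> ab' by (auto elim!: matching_edgeE simp: doubleton_eq_iff)
  have "e \<inter> e' = {}" using matching \<open>e \<in> M\<close> \<open>e' \<in> M\<close> \<open>e \<noteq> e'\<close> unfolding is_matching_def by blast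
  then have distinct: "a \<noteq> a'" "a \<noteq> b'" "b \<noteq> a'" "b \<noteq> b'" using ab(4) ab' by auto
  define \<pi> where "\<pi> = transpose a a' \<circ> transpose b b'"
  have \<pi>_apply: "\<pi> x = (if x = a then a' else if x = a' then a else if x = b then b' else if x = b' then b else x)" for x
    using ab(3) \<open>a' \<noteq> b'\<close> distinct by (auto simp: \<pi>_def transpose_def)
  have "\<pi> a = a"
  proof (rule distinguishing_labeling_involution_fixes[where \<pi> = \<pi>])
    show "\<pi> ` f \<in> M" if "f \<in> M" for f
    proof (cases "f = e \<or> f = e'")
      case True
      moreover have "\<pi> ` e = e'" "\<pi> ` e' = e"
        using ab(3) \<open>a' \<noteq> b'\<close> distinct by (auto simp: ab(4) ab' \<pi>_apply)
      ultimately show ?thesis using \<open>e \<in> M\<close> \<open>e' \<in> M\<close> by auto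
    next
      case False
      then have "a \<notin> f" "b \<notin> f" "a' \<notin> f" "b' \<notin> f"
        using matching_edge_eq[OF that \<open>e \<in> M\<close>] matching_edge_eq[OF that \<open>e' \<in> M\<close>] ab(4) ab' by auto
      then have "\<pi> ` f = f" by (auto simp: \<pi>_apply)
      then show ?thesis using that by simp
    qed
    show "l (Inl (\<pi> x)) = l (Inl x)" if "x \<in> V" for x
      using labels by (simp add: \<pi>_apply)
  qed (use ab \<open>a' \<in> V\<close> \<open>b' \<in> V\<close> \<open>a' \<noteq> b'\<close> distinct in \<open>auto simp: \<pi>_apply\<close>)
  then show False using distinct by (simp add: \<pi>_apply)
qed

lemma distinguishing_labeling_imp_matching_separating: "matching_separating V M (l \<circ> Inl)"
proof -
  have "inj_on (l \<circ> Inl) (V - \<Union>M)"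
  proof (rule inj_onI)
    fix a b assume "a \<in> V - \<Union>M" "b \<in> V - \<Union>M" "(l \<circ> Inl) a = (l \<circ> Inl) b"
    then show "a = b" by (intro distinguishing_labeling_transpose_eq) auto
  qed
  moreover have "inj_on (l \<circ> Inl) e" if "e \<in> M" for e
  proof (rule inj_onI)
    fix a b assume "a \<in> e" "b \<in> e" "(l \<circ> Inl) a = (l \<circ> Inl) b"
    moreover have "a \<in> f \<longleftrightarrow> b \<in> f" if "f \<in> M" for f
      using matching_edge_eq[OF that \<open>e \<in> M\<close>] \<open>a \<in> e\<close> \<open>b \<in> e\<close> by blast
    moreover have "e \<subseteq> V" using \<open>e \<in> M\<close> by (auto elim: matching_edgeE)
    ultimately show "a = b" by (intro distinguishing_labeling_transpose_eq) auto
  qed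
  ultimately show ?thesis
    using distinguishing_labeling_inj_on_edge_labels unfolding matching_separating_def by blast
qed

end

end

locale complete_minus_matching_functigraph = complete_minus_matching +
  fixes c :: 'a
  assumes c_in_V: "c \<in> V" and three_le_card_V: "3 \<le> card V"
begin

abbreviation FV :: "('a + 'a) set" where
  "FV \<equiv> functigraph_V V"

abbreviation FE :: "('a + 'a) set set" where
  "FE \<equiv> functigraph_E V (complete_edges V - M) (\<lambda>_. c)"

lemma ex_third_vertex: obtains w where "w \<in> V" "w \<noteq> a" "w \<noteq> b"
proof -
  have "card {a, b} \<le> 2" by (cases "a = b") auto
  then have "card V - 2 \<le> card (V - {a, b})"
    using diff_card_le_card_Diff[of "{a, b}" V] by simp
  then have "0 < card (V - {a, b})" using three_le_card_V by linarith
  then have "V - {a, b} \<noteq> {}" by (simp add: card_gt_0_iff)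
  then show thesis using that by blast
qed

lemma ex_non_partner:
  assumes "x \<in> V" obtains w where "w \<in> V" "w \<noteq> x" "{x, w} \<notin> M"
proof -
  obtain y where "y \<in> V" "y \<noteq> x" using ex_third_vertex by metis
  moreover obtain z where "z \<in> V" "z \<noteq> x" "z \<noteq> y" using ex_third_vertex by metis
  ultimately show thesis using that matching_partner_unique by metis
qed

lemma ex_common_non_partner:
  assumes "{a, b} \<in> M" obtains w where "w \<in> V" "{a, w} \<notin> M" "{w, b} \<notin> M" "w \<noteq> a" "w \<noteq> b"
proof -
  obtain w where "w \<in> V" "w \<noteq> a" "w \<noteq> b" using ex_third_vertex by metis
  then show thesis
    using that assms matching_partner_unique[of a b w] matching_partner_unique[of b a w]
    by (metis insert_commute)
qed

lemma adjacency_closed_eq_V: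
  assumes "S \<subseteq> V" and "a \<in> S"
    and closed: "\<And>x y. x \<in> S \<Longrightarrow> {x, y} \<in> complete_edges V - M \<Longrightarrow> y \<in> S"
  shows "S = V"
proof (intro equalityI subsetI)
  fix y assume "y \<in> V"
  show "y \<in> S"
  proof (cases "y = a \<or> {a, y} \<notin> M")
    case True
    then show ?thesis using closed assms \<open>y \<in> V\<close> by auto
  next
    case False
    then have "{a, y} \<in> M" by simp
    then obtain w where "w \<in> V" "{a, w} \<notin> M" "{w, y} \<notin> M" "w \<noteq> a" "w \<noteq> y"
      by (rule ex_common_non_partner)
    moreover have "a \<in> V" using assms(1,2) by blast
    ultimately have "w \<in> S" using closed[of a w] \<open>a \<in> S\<close> by simp
    then show ?thesis using closed[of w y] \<open>w \<in> V\<close> \<open>y \<in> V\<close> \<open>{w, y} \<notin> M\<close> \<open>w \<noteq> y\<close> by simp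
  qed
qed (use assms in auto)

lemma card_neighbors_Inl_le:
  assumes "u \<in> V" shows "card (neighbors FV FE (Inl u)) \<le> card V"
proof -
  have "neighbors FV FE (Inl u) \<subseteq> insert (Inr c) (Inl ` (V - {u}))"
  proof
    fix y assume "y \<in> neighbors FV FE (Inl u)"
    then have "y \<in> FV" "{Inl u, y} \<in> FE" by (simp_all add: neighbors_def)
    then show "y \<in> insert (Inr c) (Inl ` (V - {u}))" by (cases rule: functigraph_V_cases) auto
  qed
  then have "card (neighbors FV FE (Inl u)) \<le> card (insert (Inr c) (Inl ` (V - {u})))"
    by (rule card_mono[rotated]) (simp add: finite_V)
  also have "\<dots> = Suc (card (V - {u}))"
    using finite_V by (simp add: card_image image_iff)
  also have "\<dots> \<le> card V"
    using finite_V three_le_card_V assms by simp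
  finally show ?thesis .
qed

lemma card_neighbors_Inr_le:
  assumes "v \<noteq> c" shows "card (neighbors FV FE (Inr v)) \<le> card V"
proof -
  have "neighbors FV FE (Inr v) \<subseteq> Inr ` V"
  proof
    fix y assume "y \<in> neighbors FV FE (Inr v)"
    then have "y \<in> FV" "{Inr v, y} \<in> FE" by (simp_all add: neighbors_def)
    then show "y \<in> Inr ` V" using assms by (cases rule: functigraph_V_cases) auto
  qed
  then have "card (neighbors FV FE (Inr v)) \<le> card (Inr ` V :: ('a + 'a) set)"
    by (rule card_mono[rotated]) (simp add: finite_V)
  also have "\<dots> = card V" by (simp add: card_image)
  finally show ?thesis .
qed

lemma card_V_less_card_neighbors_Inr_c: "card V < card (neighbors FV FE (Inr c))"
proof -
  obtain w where "w \<in> V" "w \<noteq> c" "{c, w} \<notin> M" using ex_non_partner[OF c_in_V] .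
  then have "insert (Inr w) (Inl ` V) \<subseteq> neighbors FV FE (Inr c)"
    using c_in_V by (auto simp: neighbors_def)
  moreover have "finite (neighbors FV FE (Inr c))"
    using finite_V by (simp add: neighbors_def functigraph_V_def)
  ultimately have "card (insert (Inr w) (Inl ` V)) \<le> card (neighbors FV FE (Inr c))"
    by (rule card_mono[rotated])
  moreover have "card (insert (Inr w) (Inl ` V)) = Suc (card V)"
    using finite_V by (simp add: card_image image_iff)
  ultimately show ?thesis by simp
qed

lemma graph_aut_fixes_Inr_c:
  assumes "graph_aut FV FE \<sigma>" shows "\<sigma> (Inr c) = Inr c"
proof -
  have "\<sigma> (Inr c) \<in> FV"
    using assms c_in_V bij_betw_apply unfolding graph_aut_def by fastforce
  moreover have deg: "card V < card (neighbors FV FE (\<sigma> (Inr c)))"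
    using card_neighbors_graph_aut[OF assms] c_in_V card_V_less_card_neighbors_Inr_c by simp
  ultimately show ?thesis
  proof (cases rule: functigraph_V_cases)
    case (Inl a)
    then show ?thesis using card_neighbors_Inl_le[of a] deg by simp
  next
    case (Inr a)
    then show ?thesis using card_neighbors_Inr_le[of a] deg by (cases "a = c") simp_all
  qed
qed

lemma graph_aut_preserves_copies:
  assumes aut: "graph_aut FV FE \<sigma>"
  shows "\<sigma> ` Inl ` V = Inl ` V" and "\<sigma> ` Inr ` V = Inr ` V"
proof -
  have bij: "bij_betw \<sigma> FV FV"
    and adj: "\<And>x y. x \<in> FV \<Longrightarrow> y \<in> FV \<Longrightarrow> {x, y} \<in> FE \<longleftrightarrow> {\<sigma> x, \<sigma> y} \<in> FE"
    using aut unfolding graph_aut_def by blast+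
  have inj: "inj_on \<sigma> FV" using bij by (rule bij_betw_imp_inj_on)
  have avoids_Inr_c: "\<sigma> (Inl b) \<noteq> Inr c" if "b \<in> V" for b
  proof
    assume "\<sigma> (Inl b) = Inr c"
    then have "\<sigma> (Inl b) = \<sigma> (Inr c)" using graph_aut_fixes_Inr_c[OF aut] by simp
    from inj_onD[OF inj this] show False using that c_in_V by simp
  qed
  txt \<open>Otherwise adjacency would push all n vertices of the first copy into the n - 1
    vertices of the second copy other than c.\<close>
  have "\<sigma> (Inl u) \<in> Inl ` V" if "u \<in> V" for u
  proof (rule ccontr)
    assume "\<sigma> (Inl u) \<notin> Inl ` V"
    define S where "S = {b \<in> V. \<sigma> (Inl b) \<notin> Inl ` V}"
    have to_Inr: "\<sigma> (Inl b) \<in> Inr ` (V - {c})" if "b \<in> S" for b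
    proof -
      have "b \<in> V" "\<sigma> (Inl b) \<notin> Inl ` V" using that by (auto simp: S_def)
      from \<open>b \<in> V\<close> have "\<sigma> (Inl b) \<in> FV" using bij_betw_apply[OF bij] by simp
      then show ?thesis using avoids_Inr_c[OF \<open>b \<in> V\<close>] \<open>\<sigma> (Inl b) \<notin> Inl ` V\<close>
        by (cases rule: functigraph_V_cases) auto
    qed
    have "S = V"
    proof (rule adjacency_closed_eq_V)
      show "u \<in> S" using that \<open>\<sigma> (Inl u) \<notin> Inl ` V\<close> by (simp add: S_def)
      fix x y assume "x \<in> S" and xy: "{x, y} \<in> complete_edges V - M"
      then obtain v where v: "v \<in> V" "v \<noteq> c" "\<sigma> (Inl x) = Inr v" using to_Inr by blast
      have "x \<in> V" "y \<in> V" using xy by auto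
      then have "{\<sigma> (Inl x), \<sigma> (Inl y)} \<in> FE" using adj[of "Inl x" "Inl y"] xy by simp
      then have "\<sigma> (Inl y) \<notin> Inl ` V" using v by auto
      then show "y \<in> S" using \<open>y \<in> V\<close> by (simp add: S_def)
    qed (auto simp: S_def)
    then have "\<sigma> ` Inl ` V \<subseteq> Inr ` (V - {c})" using to_Inr by blast
    then have "card (\<sigma> ` Inl ` V) \<le> card (Inr ` (V - {c}) :: ('a + 'a) set)" by (rule card_mono[rotated]) (simp add: finite_V)
    also have "\<dots> = card V - 1" using finite_V c_in_V by (simp add: card_image)
    also have "card (\<sigma> ` Inl ` V) = card V"
      using card_image[OF inj_on_subset[OF inj]] by (simp add: card_image functigraph_V_def)
    finally show False using three_le_card_V by simp
  qed
  then have "\<sigma> ` Inl ` V \<subseteq> Inl ` V" by blast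
  moreover have "inj_on \<sigma> (Inl ` V)" by (rule inj_on_subset[OF inj]) (simp add: functigraph_V_def)
  ultimately show Inl_image: "\<sigma> ` Inl ` V = Inl ` V" using finite_V by (intro endo_inj_surj) simp_all
  have "Inr ` V = FV - Inl ` V" by (auto simp: functigraph_V_def)
  moreover have "\<sigma> ` (FV - Inl ` V) = \<sigma> ` FV - \<sigma> ` Inl ` V"
    by (rule inj_on_image_set_diff[OF inj]) (auto simp: functigraph_V_def)
  ultimately show "\<sigma> ` Inr ` V = Inr ` V"
    using bij_betw_imp_surj_on[OF bij] Inl_image by simp
qed

lemma matching_separating_imp_distinguishing_labeling:
  assumes sep: "matching_separating V M l" and "l ` V \<subseteq> {1..t}"
  shows "distinguishing_labeling FV FE t (case_sum l l)"
  unfolding distinguishing_labeling_def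
proof (intro conjI allI impI)
  show "case_sum l l ` FV \<subseteq> {1..t}"
  proof (rule image_subsetI)
    fix v assume "v \<in> FV"
    then show "case_sum l l v \<in> {1..t}" using assms(2) by (cases rule: functigraph_V_cases) auto
  qed
  fix \<sigma> assume "graph_aut FV FE \<sigma> \<and> (\<forall>v\<in>FV. case_sum l l (\<sigma> v) = case_sum l l v)"
  then have aut: "graph_aut FV FE \<sigma>" and labels: "\<And>v. v \<in> FV \<Longrightarrow> case_sum l l (\<sigma> v) = case_sum l l v"
    by blast+
  have is_fixed: "\<sigma> (f a) = f a"
    if aut_restr: "graph_aut V (complete_edges V - M) (p \<circ> \<sigma> \<circ> f)" and p_f: "\<And>x. p (f x) = x"
      and image: "\<sigma> ` f ` V = f ` V" and f_labels: "\<And>x. case_sum l l (f x) = l x"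
      and "f ` V \<subseteq> FV" and "a \<in> V"
    for f :: "'a \<Rightarrow> 'a + 'a" and p a
  proof -
    define \<pi> where "\<pi> = p \<circ> \<sigma> \<circ> f"
    have \<sigma>_f: "\<sigma> (f x) = f (\<pi> x)" if "x \<in> V" for x
    proof -
      have "\<sigma> (f x) \<in> \<sigma> ` f ` V" using that by (intro imageI)
      then obtain w where "\<sigma> (f x) = f w" unfolding image by (rule imageE)
      then show ?thesis using p_f by (simp add: \<pi>_def)
    qed
    have "l (\<pi> x) = l x" if "x \<in> V" for x
    proof -
      have "f x \<in> FV" using \<open>f ` V \<subseteq> FV\<close> that by blast
      then have "case_sum l l (\<sigma> (f x)) = case_sum l l (f x)" by (rule labels)
      then show ?thesis using \<sigma>_f[OF that] by (simp add: f_labels)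
    qed
    moreover have "graph_aut V (complete_edges V - M) \<pi>" using aut_restr by (simp only: \<pi>_def)
    ultimately have "\<pi> a = a" using graph_aut_fixes_if_matching_separating sep \<open>a \<in> V\<close> by blast
    then show ?thesis using \<sigma>_f[OF \<open>a \<in> V\<close>] by simp
  qed
  note copies = graph_aut_preserves_copies[OF aut]
  note restrict = graph_aut_functigraph_restrict[OF aut copies]
  show "\<forall>v\<in>FV. \<sigma> v = v"
  proof
    fix v assume "v \<in> FV"
    then show "\<sigma> v = v"
    proof (cases rule: functigraph_V_cases)
      case (Inl a)
      have "\<sigma> (Inl a) = Inl a"
        by (rule is_fixed[where f = Inl and p = projl]) (use restrict copies Inl in \<open>auto simp: functigraph_V_def\<close>)
      then show ?thesis using Inl by simp
    next
      case (Inr a)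
      have "\<sigma> (Inr a) = Inr a"
        by (rule is_fixed[where f = Inr and p = projr]) (use restrict copies Inr in \<open>auto simp: functigraph_V_def\<close>)
      then show ?thesis using Inr by simp
    qed
  qed
qed

lemma ex_distinguishing_labeling_iff:
  "(\<exists>l. distinguishing_labeling FV FE t l) \<longleftrightarrow> card (V - \<Union>M) \<le> t \<and> card M \<le> t choose 2"
proof
  assume "\<exists>l. distinguishing_labeling FV FE t l"
  then obtain l where l: "distinguishing_labeling FV FE t l" ..
  have "(l \<circ> Inl) ` V \<subseteq> {1..t}"
    using l unfolding distinguishing_labeling_def by (auto simp: functigraph_V_def)
  with distinguishing_labeling_imp_matching_separating[OF l]
  show "card (V - \<Union>M) \<le> t \<and> card M \<le> t choose 2"
    using matching_separating_card_le[of "l \<circ> Inl" "{1..t}"] by simp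
next
  assume "card (V - \<Union>M) \<le> t \<and> card M \<le> t choose 2"
  then obtain l where "l ` V \<subseteq> {1..t}" "matching_separating V M l"
    using ex_matching_separating[of "{1..t}"] by auto
  then show "\<exists>l. distinguishing_labeling FV FE t l"
    using matching_separating_imp_distinguishing_labeling by blast
qed

lemma Dist_eq:
  assumes "M \<noteq> {}"
  shows "Dist FV FE = max (card (V - \<Union>M)) (phi (card M))"
proof -
  have "1 \<le> card M" using assms finite_M by (simp add: Suc_le_eq card_gt_0_iff)
  then have "(\<exists>l. distinguishing_labeling FV FE t l) \<longleftrightarrow> max (card (V - \<Union>M)) (phi (card M)) \<le> t" for t
    by (simp add: ex_distinguishing_labeling_iff phi_le_iff)
  then show ?thesis unfolding Dist_def by (intro Least_equality) auto
qed

end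

theorem theorem3p4:
  fixes V :: "'a set" and M :: "'a set set" and n i :: nat and g :: "'a \<Rightarrow> 'a" and c :: 'a
  assumes "finite V" and "card V = n" and "n \<ge> 5"
    and "1 \<le> i" and "i \<le> n div 2"
    and "M \<subseteq> complete_edges V" and "card M = i" and "is_matching M"
    and "c \<in> V" and "\<forall>u\<in>V. g u = c"
  shows "Dist (functigraph_V V) (functigraph_E V (complete_edges V - M) g) = max (n - 2 * i) (phi i)"
proof -
  interpret complete_minus_matching_functigraph V M c
    by unfold_locales (use assms in auto)
  have "functigraph_E V (complete_edges V - M) g = FE"
    using assms(10) by (intro functigraph_E_cong) simp
  moreover have "\<Union>M \<subseteq> V" using assms(6) by (auto simp: complete_edges_def)
  then have "card (V - \<Union>M) = n - 2 * i"
    using assms(1,2,7) card_Union_matching by (simp add: card_Diff_subset finite_subset)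
  moreover have "M \<noteq> {}" using assms(4,7) by auto
  ultimately show ?thesis using Dist_eq assms(7) by simp
qed

end
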